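(* Let $n,m\ge 1$ and let $f\in L^2((0,1)^n)$ and $h\in L^2((0,1)^m)$ be real-valued with $f$ not a.e. constant, and define $g(x,\xi)=f(x)+h(\xi)$ for $x\in(0,1)^n$, $\xi\in(0,1)^m$. Fix $i\in\{1,\dots,n\}$. Then $$S^g_{T_{x_i}}=\mu_{f,h}\,S^f_{T_{x_i}},\qquad \mu_{f,h}=\frac{1}{1+\frac{\mathrm{Var}(h)}{\mathrm{Var}(f)}}.$$ In particular $S^g_{T_{x_i}}\le S^f_{T_{x_i}}$.
   Context: All integrals are with respect to Lebesgue measure over the unit cubes (inputs independent, uniform on $[0,1]$). For a function $\varphi$, $\varphi_0=\int\varphi$ and $\mathrm{Var}(\varphi)=\int\varphi^2-\varphi_0^2$. For a square-integrable $\varphi$ of variables $(x,y)$ with $x=(x_1,\dots,x_n)$, $x_{\sim i}=(x_1,\dots,x_{i-1},x_{i+1},\dots,x_n)$, the total Sobol sensitivity index of $x_i$ is $$S^{\varphi}_{T_{x_i}}=\frac{\int\varphi^2\,dx\,dy-\int\big(\int\varphi\,dx_i\big)^2dx_{\sim i}\,dy}{\mathrm{Var}(\varphi)},$$ defined when $\mathrm{Var}(\varphi)>0$. *)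

theory Defs
  imports "HOL-Probability.Probability"
begin

definition unit_unif :: "real measure" where
  "unit_unif = uniform_measure lborel {0<..<1}"

text \<open>Lebesgue measure on the unit cube indexed by the finite set I
  (points are extensional functions I \<rightarrow> real).\<close>
definition cube :: "'i set \<Rightarrow> ('i \<Rightarrow> real) measure" where
  "cube I = PiM I (\<lambda>_. unit_unif)"

definition mean :: "'i set \<Rightarrow> (('i \<Rightarrow> real) \<Rightarrow> real) \<Rightarrow> real" where
  "mean I \<phi> = (\<integral>x. \<phi> x \<partial>cube I)"

definition Var :: "'i set \<Rightarrow> (('i \<Rightarrow> real) \<Rightarrow> real) \<Rightarrow> real" where
  "Var I \<phi> = (\<integral>x. (\<phi> x)\<^sup>2 \<partial>cube I) - (mean I \<phi>)\<^sup>2"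

text \<open>The inner integral
  integrates out the i-th coordinate; the result does not depend on the i-th
  coordinate, so integrating it over the whole cube equals integrating over
  the remaining variables.\<close>
definition sobol_total :: "'i set \<Rightarrow> 'i \<Rightarrow> (('i \<Rightarrow> real) \<Rightarrow> real) \<Rightarrow> real" where
  "sobol_total I i \<phi> =
     ((\<integral>x. (\<phi> x)\<^sup>2 \<partial>cube I)
      - (\<integral>x. (\<integral>t. \<phi> (x(i := t)) \<partial>unit_unif)\<^sup>2 \<partial>cube I)) / Var I \<phi>"

definition L2_cube :: "'i set \<Rightarrow> (('i \<Rightarrow> real) \<Rightarrow> real) \<Rightarrow> bool" where
  "L2_cube I \<phi> \<longleftrightarrow> \<phi> \<in> borel_measurable (cube I) \<and> integrable (cube I) (\<lambda>x. (\<phi> x)\<^sup>2)"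

end

theory Submission
  imports Defs
begin

(* The cube over the disjoint union of the index sets is the image of the
   product of the two cubes under the map merging x and \<xi>, so g becomes f(x) + h(\<xi>) on a
   product of probability spaces.  Integrating out x_i commutes with adding h(\<xi>), hence
   \<integral>g\<^sup>2 and \<integral>(\<integral>g dx_i)\<^sup>2 both exceed their counterparts for f by the same amount
   2 \<integral>f \<integral>h + \<integral>h\<^sup>2: the numerator of the total index is unchanged, while
   Var g = Var f + Var h.  The inequality holds because the numerator is nonnegative by
   Jensen, (\<integral>f dx_i)\<^sup>2 \<le> \<integral>f\<^sup>2 dx_i. *)

lemma prob_space_unit_unif: "prob_space unit_unif"
  unfolding unit_unif_def by (rule prob_space_uniform_measure) auto

lemma space_unit_unif [simp]: "space unit_unif = UNIV"
  unfolding unit_unif_def by simp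

interpretation unit_unif: prob_space unit_unif
  by (rule prob_space_unit_unif)

interpretation unit_cube: product_sigma_finite "\<lambda>_. unit_unif"
  by (simp add: product_sigma_finite_def prob_space_unit_unif prob_space_imp_sigma_finite)

lemma prob_space_cube: "prob_space (cube I)"
  unfolding cube_def by (rule prob_space_PiM) (simp add: prob_space_unit_unif)

lemma space_cube: "space (cube I) = PiE I (\<lambda>_. UNIV)"
  unfolding cube_def by (simp add: space_PiM)

lemma prob_spaces_imp_pair_prob_space:
  "prob_space M \<Longrightarrow> prob_space N \<Longrightarrow> pair_prob_space M N"
  by (simp add: pair_prob_space_def pair_sigma_finite_def prob_space_imp_sigma_finite)

lemma L2_cube_integrable: "L2_cube I \<phi> \<Longrightarrow> integrable (cube I) \<phi>"
  unfolding L2_cube_def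
  using finite_measure.square_integrable_imp_integrable[OF prob_space.finite_measure[OF prob_space_cube]]
  by blast

lemma Var_eq_variance:
  assumes "L2_cube I \<phi>"
  shows "Var I \<phi> = prob_space.variance (cube I) \<phi>"
proof -
  interpret prob_space "cube I" by (rule prob_space_cube)
  have "integrable (cube I) \<phi>" and "integrable (cube I) (\<lambda>x. (\<phi> x)\<^sup>2)"
    using assms L2_cube_integrable by (auto simp: L2_cube_def)
  from variance_eq[OF this] show ?thesis
    unfolding Var_def mean_def by simp
qed

lemma Var_nonneg: "L2_cube I \<phi> \<Longrightarrow> 0 \<le> Var I \<phi>"
  using prob_space.variance_positive[OF prob_space_cube] by (simp add: Var_eq_variance)

lemma Var_pos:
  assumes "L2_cube I \<phi>" and not_const: "\<not> (\<exists>c. AE x in cube I. \<phi> x = c)"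
  shows "0 < Var I \<phi>"
proof (rule ccontr)
  interpret prob_space "cube I" by (rule prob_space_cube)
  assume "\<not> 0 < Var I \<phi>"
  with Var_nonneg[OF assms(1)] have "Var I \<phi> = 0" by linarith
  then have "variance \<phi> = 0"
    using Var_eq_variance[OF assms(1)] by simp
  moreover have "integrable (cube I) (\<lambda>x. (\<phi> x - expectation \<phi>)\<^sup>2)"
  proof -
    have "integrable (cube I) \<phi>" and "integrable (cube I) (\<lambda>x. (\<phi> x)\<^sup>2)"
      using assms(1) L2_cube_integrable by (auto simp: L2_cube_def)
    then show ?thesis
      by (simp add: power2_diff algebra_simps)
  qed
  ultimately have "AE x in cube I. (\<phi> x - expectation \<phi>)\<^sup>2 = 0"
    by (simp add: integral_nonneg_eq_0_iff_AE)
  then have "AE x in cube I. \<phi> x = expectation \<phi>"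
    by eventually_elim simp
  with not_const show False by blast
qed

lemma (in prob_space) square_integral_le_integral_square:
  fixes f :: "'a \<Rightarrow> real"
  assumes "f \<in> borel_measurable M" and "integrable M (\<lambda>x. (f x)\<^sup>2)"
  shows "(\<integral>x. f x \<partial>M)\<^sup>2 \<le> (\<integral>x. (f x)\<^sup>2 \<partial>M)"
  using variance_positive[of f] variance_eq[OF square_integrable_imp_integrable[OF assms] assms(2)]
  by simp

lemma measurable_cube_update:
  assumes "i \<in> I"
  shows "(\<lambda>(x, t). x(i := t)) \<in> measurable (cube I \<Otimes>\<^sub>M unit_unif) (cube I)"
proof -
  have "(\<lambda>p. restrict ((fst p)(i := snd p)) I) \<in> measurable (cube I \<Otimes>\<^sub>M unit_unif) (cube I)"
    unfolding cube_def by (rule measurable_restrict) (auto split: if_split)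
  moreover have "restrict ((fst p)(i := snd p)) I = (\<lambda>(x, t). x(i := t)) p"
    if "p \<in> space (cube I \<Otimes>\<^sub>M unit_unif)" for p
    using that assms by (auto simp: space_pair_measure space_cube PiE_iff extensional_def)
  ultimately show ?thesis
    by (rule measurable_cong[THEN iffD1, rotated])
qed

lemma distr_cube_update:
  assumes I: "finite I" and i: "i \<in> I"
  shows "distr (cube I \<Otimes>\<^sub>M unit_unif) (cube I) (\<lambda>(x, t). x(i := t)) = cube I"
  unfolding cube_def
proof (rule unit_cube.PiM_eqI[OF I])
  fix S assume S: "\<And>j. j \<in> I \<Longrightarrow> S j \<in> sets unit_unif"
  let ?C = "PiM I (\<lambda>_. unit_unif)"
  have preimage: "(\<lambda>(x, t). x(i := t)) -` PiE I S \<inter> space (?C \<Otimes>\<^sub>M unit_unif)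
      = PiE I (S(i := UNIV)) \<times> S i"
    using i by (auto simp: space_pair_measure space_PiM PiE_iff extensional_def split: if_splits)
  have C_sets: "PiE I (S(i := UNIV)) \<in> sets ?C"
    using S sets.top[of unit_unif] by (intro sets_PiM_I_finite[OF I]) auto
  have "emeasure (distr (?C \<Otimes>\<^sub>M unit_unif) ?C (\<lambda>(x, t). x(i := t))) (PiE I S)
      = emeasure (?C \<Otimes>\<^sub>M unit_unif) (PiE I (S(i := UNIV)) \<times> S i)"
    using measurable_cube_update[OF i] S I preimage
    by (subst emeasure_distr) (auto simp: cube_def intro!: sets_PiM_I_finite)
  also have "\<dots> = emeasure ?C (PiE I (S(i := UNIV))) * emeasure unit_unif (S i)"
    using prob_space_unit_unif C_sets S[OF i]
    by (simp add: prob_space_imp_sigma_finite sigma_finite_measure.emeasure_pair_measure_Times)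
  also have "\<dots> = (\<Prod>j\<in>I. emeasure unit_unif ((S(i := UNIV)) j)) * emeasure unit_unif (S i)"
    using S I sets.top[of unit_unif] by (subst unit_cube.emeasure_PiM) auto
  also have "\<dots> = (\<Prod>j\<in>I. emeasure unit_unif (S j))"
    using prob_space.emeasure_space_1[OF prob_space_unit_unif]
    by (simp add: prod.remove[OF I i] mult.commute)
  finally show "emeasure (distr (?C \<Otimes>\<^sub>M unit_unif) ?C (\<lambda>(x, t). x(i := t))) (PiE I S)
      = (\<Prod>j\<in>I. emeasure unit_unif (S j))" .
qed simp

definition partial_mean :: "'i \<Rightarrow> (('i \<Rightarrow> real) \<Rightarrow> real) \<Rightarrow> ('i \<Rightarrow> real) \<Rightarrow> real" where
  "partial_mean i \<phi> x = (\<integral>t. \<phi> (x(i := t)) \<partial>unit_unif)"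

lemma sobol_total_eq_partial_mean:
  "sobol_total I i \<phi> =
     ((\<integral>x. (\<phi> x)\<^sup>2 \<partial>cube I) - (\<integral>x. (partial_mean i \<phi> x)\<^sup>2 \<partial>cube I)) / Var I \<phi>"
  unfolding sobol_total_def partial_mean_def ..

context
  fixes I :: "'i set" and i :: 'i
  assumes finite_I: "finite I" and i_in_I: "i \<in> I"
begin

interpretation cube_unif: pair_prob_space "cube I" unit_unif
  by (simp add: prob_spaces_imp_pair_prob_space prob_space_cube prob_space_unit_unif)

lemma measurable_cube_update_section:
  "x \<in> space (cube I) \<Longrightarrow> (\<lambda>t. x(i := t)) \<in> measurable unit_unif (cube I)"
  using measurable_compose[OF measurable_Pair1' measurable_cube_update[OF i_in_I]] by simp

lemma integrable_cube_update:
  fixes \<psi> :: "('i \<Rightarrow> real) \<Rightarrow> real"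
  assumes "integrable (cube I) \<psi>"
  shows "integrable (cube I \<Otimes>\<^sub>M unit_unif) (\<lambda>(x, t). \<psi> (x(i := t)))"
  using integrable_distr_eq[OF measurable_cube_update[OF i_in_I] borel_measurable_integrable[OF assms]]
    assms distr_cube_update[OF finite_I i_in_I]
  by (simp add: prod.case_distrib)

lemma integral_cube_update:
  fixes \<psi> :: "('i \<Rightarrow> real) \<Rightarrow> real"
  assumes "\<psi> \<in> borel_measurable (cube I)"
  shows "(\<integral>(x, t). \<psi> (x(i := t)) \<partial>(cube I \<Otimes>\<^sub>M unit_unif)) = (\<integral>x. \<psi> x \<partial>cube I)"
  using integral_distr[OF measurable_cube_update[OF i_in_I] assms] distr_cube_update[OF finite_I i_in_I]
  by (simp add: prod.case_distrib)

lemma AE_integrable_update_section: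
  fixes \<phi> :: "('i \<Rightarrow> real) \<Rightarrow> real"
  shows "integrable (cube I) \<phi> \<Longrightarrow> AE x in cube I. integrable unit_unif (\<lambda>t. \<phi> (x(i := t)))"
  by (rule cube_unif.AE_integrable_fst[OF integrable_cube_update])

lemma integrable_partial_mean:
  "integrable (cube I) \<phi> \<Longrightarrow> integrable (cube I) (partial_mean i \<phi>)"
  using cube_unif.integrable_fst[OF integrable_cube_update] unfolding partial_mean_def[abs_def] .

lemma integral_partial_mean:
  assumes "integrable (cube I) \<phi>"
  shows "(\<integral>x. partial_mean i \<phi> x \<partial>cube I) = (\<integral>x. \<phi> x \<partial>cube I)"
  using cube_unif.integral_fst[OF integrable_cube_update[OF assms]]
    integral_cube_update[OF borel_measurable_integrable[OF assms]]
  unfolding partial_mean_def by simp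

lemma AE_square_partial_mean_le:
  assumes "L2_cube I \<phi>"
  shows "AE x in cube I. (partial_mean i \<phi> x)\<^sup>2 \<le> partial_mean i (\<lambda>y. (\<phi> y)\<^sup>2) x"
proof -
  have "integrable (cube I) (\<lambda>y. (\<phi> y)\<^sup>2)"
    using assms by (simp add: L2_cube_def)
  then have "AE x in cube I. integrable unit_unif (\<lambda>t. (\<phi> (x(i := t)))\<^sup>2)"
    by (rule AE_integrable_update_section)
  then show ?thesis
  proof (rule AE_mp, intro AE_I2 impI)
    fix x assume x: "x \<in> space (cube I)"
      and square_integrable: "integrable unit_unif (\<lambda>t. (\<phi> (x(i := t)))\<^sup>2)"
    have "(\<lambda>t. \<phi> (x(i := t))) \<in> borel_measurable unit_unif"
      using measurable_compose[OF measurable_cube_update_section[OF x]] assms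
      unfolding L2_cube_def by blast
    then show "(partial_mean i \<phi> x)\<^sup>2 \<le> partial_mean i (\<lambda>y. (\<phi> y)\<^sup>2) x"
      using unit_unif.square_integral_le_integral_square[OF _ square_integrable]
      unfolding partial_mean_def by simp
  qed
qed

lemma L2_cube_partial_mean:
  assumes "L2_cube I \<phi>"
  shows "L2_cube I (partial_mean i \<phi>)"
proof -
  have "integrable (cube I) \<phi>" and "integrable (cube I) (\<lambda>y. (\<phi> y)\<^sup>2)"
    using assms L2_cube_integrable by (auto simp: L2_cube_def)
  then have "integrable (cube I) (partial_mean i \<phi>)"
    and "integrable (cube I) (partial_mean i (\<lambda>y. (\<phi> y)\<^sup>2))"
    by (simp_all add: integrable_partial_mean)
  moreover have "AE x in cube I. norm ((partial_mean i \<phi> x)\<^sup>2) \<le> norm (partial_mean i (\<lambda>y. (\<phi> y)\<^sup>2) x)"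
    using AE_square_partial_mean_le[OF assms] by eventually_elim simp
  ultimately show ?thesis
    unfolding L2_cube_def by (auto intro: Bochner_Integration.integrable_bound)
qed

lemma integral_square_partial_mean_le:
  assumes "L2_cube I \<phi>"
  shows "(\<integral>x. (partial_mean i \<phi> x)\<^sup>2 \<partial>cube I) \<le> (\<integral>x. (\<phi> x)\<^sup>2 \<partial>cube I)"
proof -
  have square_integrable: "integrable (cube I) (\<lambda>y. (\<phi> y)\<^sup>2)"
    using assms by (simp add: L2_cube_def)
  have "(\<integral>x. (partial_mean i \<phi> x)\<^sup>2 \<partial>cube I) \<le> (\<integral>x. partial_mean i (\<lambda>y. (\<phi> y)\<^sup>2) x \<partial>cube I)"
    using integrable_partial_mean[OF square_integrable] AE_square_partial_mean_le[OF assms]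
    by (rule integral_mono_AE') (auto simp: partial_mean_def)
  also have "\<dots> = (\<integral>x. (\<phi> x)\<^sup>2 \<partial>cube I)"
    by (rule integral_partial_mean[OF square_integrable])
  finally show ?thesis .
qed

lemma sobol_total_nonneg:
  assumes "L2_cube I \<phi>"
  shows "0 \<le> sobol_total I i \<phi>"
  unfolding sobol_total_eq_partial_mean
  using integral_square_partial_mean_le[OF assms] Var_nonneg[OF assms] by simp

end

lemma (in pair_sigma_finite)
  fixes u :: "'a \<Rightarrow> real" and v :: "'b \<Rightarrow> real"
  assumes u: "integrable M1 u" and v: "integrable M2 v"
  shows integrable_product_mult: "integrable (M1 \<Otimes>\<^sub>M M2) (\<lambda>(x, y). u x * v y)"
    and integral_product_mult: "(\<integral>(x, y). u x * v y \<partial>(M1 \<Otimes>\<^sub>M M2)) = (\<integral>x. u x \<partial>M1) * (\<integral>y. v y \<partial>M2)"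
proof -
  show integrable: "integrable (M1 \<Otimes>\<^sub>M M2) (\<lambda>(x, y). u x * v y)"
  proof (rule Fubini_integrable)
    show "(\<lambda>(x, y). u x * v y) \<in> borel_measurable (M1 \<Otimes>\<^sub>M M2)"
      using u v by measurable
    show "integrable M1 (\<lambda>x. \<integral>y. norm ((\<lambda>(x, y). u x * v y) (x, y)) \<partial>M2)"
      using u by (simp add: abs_mult)
    show "AE x in M1. integrable M2 (\<lambda>y. (\<lambda>(x, y). u x * v y) (x, y))"
      using v by simp
  qed
  show "(\<integral>(x, y). u x * v y \<partial>(M1 \<Otimes>\<^sub>M M2)) = (\<integral>x. u x \<partial>M1) * (\<integral>y. v y \<partial>M2)"
    using integral_fst[of "\<lambda>x y. u x * v y", OF integrable] by simp
qed

lemma (in pair_prob_space)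
  fixes u :: "'a \<Rightarrow> real" and v :: "'b \<Rightarrow> real"
  assumes u: "integrable M1 u" and v: "integrable M2 v"
  shows integrable_fst_plus_snd: "integrable (M1 \<Otimes>\<^sub>M M2) (\<lambda>(x, y). u x + v y)"
    and integral_fst_plus_snd: "(\<integral>(x, y). u x + v y \<partial>(M1 \<Otimes>\<^sub>M M2)) = (\<integral>x. u x \<partial>M1) + (\<integral>y. v y \<partial>M2)"
proof -
  \<comment> \<open>Each one-variable term is a product with the constant 1, whose integral is 1.\<close>
  have one: "integrable M1 (\<lambda>_. 1::real)" "integrable M2 (\<lambda>_. 1::real)"
    by simp_all
  have "integrable (M1 \<Otimes>\<^sub>M M2) (\<lambda>(x, y). u x)" "integrable (M1 \<Otimes>\<^sub>M M2) (\<lambda>(x, y). v y)"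
    using integrable_product_mult[OF u one(2)] integrable_product_mult[OF one(1) v] by simp_all
  moreover have "(\<integral>(x, y). u x \<partial>(M1 \<Otimes>\<^sub>M M2)) = (\<integral>x. u x \<partial>M1)"
    "(\<integral>(x, y). v y \<partial>(M1 \<Otimes>\<^sub>M M2)) = (\<integral>y. v y \<partial>M2)"
    using integral_product_mult[OF u one(2)] integral_product_mult[OF one(1) v]
    by (simp_all add: M1.prob_space M2.prob_space)
  ultimately show "integrable (M1 \<Otimes>\<^sub>M M2) (\<lambda>(x, y). u x + v y)"
    and "(\<integral>(x, y). u x + v y \<partial>(M1 \<Otimes>\<^sub>M M2)) = (\<integral>x. u x \<partial>M1) + (\<integral>y. v y \<partial>M2)"
    by (simp_all add: case_prod_beta')
qed

lemma (in pair_prob_space)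
  fixes u :: "'a \<Rightarrow> real" and v :: "'b \<Rightarrow> real"
  assumes u: "u \<in> borel_measurable M1" "integrable M1 (\<lambda>x. (u x)\<^sup>2)"
    and v: "v \<in> borel_measurable M2" "integrable M2 (\<lambda>y. (v y)\<^sup>2)"
  shows integrable_square_fst_plus_snd: "integrable (M1 \<Otimes>\<^sub>M M2) (\<lambda>(x, y). (u x + v y)\<^sup>2)"
    and integral_square_fst_plus_snd: "(\<integral>(x, y). (u x + v y)\<^sup>2 \<partial>(M1 \<Otimes>\<^sub>M M2)) =
      (\<integral>x. (u x)\<^sup>2 \<partial>M1) + 2 * (\<integral>x. u x \<partial>M1) * (\<integral>y. v y \<partial>M2) + (\<integral>y. (v y)\<^sup>2 \<partial>M2)"
proof -
  have expand: "(\<lambda>(x, y). (u x + v y)\<^sup>2) = (\<lambda>p. (\<lambda>(x, y). (u x)\<^sup>2 + (v y)\<^sup>2) p + 2 * (\<lambda>(x, y). u x * v y) p)"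
    by (auto simp: power2_sum)
  have "integrable M1 u" "integrable M2 v"
    using u v by (simp_all add: M1.square_integrable_imp_integrable M2.square_integrable_imp_integrable)
  note product = integrable_product_mult[OF this] integral_product_mult[OF this]
  note squares = integrable_fst_plus_snd[OF u(2) v(2)] integral_fst_plus_snd[OF u(2) v(2)]
  show "integrable (M1 \<Otimes>\<^sub>M M2) (\<lambda>(x, y). (u x + v y)\<^sup>2)"
    unfolding expand using product squares by simp
  show "(\<integral>(x, y). (u x + v y)\<^sup>2 \<partial>(M1 \<Otimes>\<^sub>M M2)) =
      (\<integral>x. (u x)\<^sup>2 \<partial>M1) + 2 * (\<integral>x. u x \<partial>M1) * (\<integral>y. v y \<partial>M2) + (\<integral>y. (v y)\<^sup>2 \<partial>M2)"
    unfolding expand using product squares by simp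
qed

definition merge_sum :: "'a set \<Rightarrow> 'b set \<Rightarrow> ('a \<Rightarrow> 'c) \<times> ('b \<Rightarrow> 'c) \<Rightarrow> 'a + 'b \<Rightarrow> 'c" where
  "merge_sum A B p = (\<lambda>k\<in>Inl ` A \<union> Inr ` B. case_sum (fst p) (snd p) k)"

lemma merge_sum_Inl: "x \<in> extensional A \<Longrightarrow> (\<lambda>j. merge_sum A B (x, y) (Inl j)) = x"
  by (fastforce simp: merge_sum_def extensional_def fun_eq_iff)

lemma merge_sum_Inr: "y \<in> extensional B \<Longrightarrow> (\<lambda>j. merge_sum A B (x, y) (Inr j)) = y"
  by (fastforce simp: merge_sum_def extensional_def fun_eq_iff)

lemma merge_sum_update_Inl:
  "i \<in> A \<Longrightarrow> (merge_sum A B (x, y))(Inl i := t) = merge_sum A B (x(i := t), y)"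
  by (auto simp: merge_sum_def fun_eq_iff split: sum.split)

lemma measurable_merge_sum:
  "merge_sum A B \<in> measurable (cube A \<Otimes>\<^sub>M cube B) (cube (Inl ` A \<union> Inr ` B))"
  unfolding merge_sum_def cube_def
proof (rule measurable_restrict)
  fix k assume "k \<in> Inl ` A \<union> Inr ` B"
  then show "(\<lambda>p. case_sum (fst p) (snd p) k) \<in> measurable (PiM A (\<lambda>_. unit_unif) \<Otimes>\<^sub>M PiM B (\<lambda>_. unit_unif)) unit_unif"
    by (cases k) auto
qed

lemma distr_merge_sum:
  assumes A: "finite A" and B: "finite B"
  shows "distr (cube A \<Otimes>\<^sub>M cube B) (cube (Inl ` A \<union> Inr ` B)) (merge_sum A B) = cube (Inl ` A \<union> Inr ` B)"
  unfolding cube_def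
proof (rule unit_cube.PiM_eqI)
  let ?K = "Inl ` A \<union> Inr ` B"
  let ?CA = "PiM A (\<lambda>_. unit_unif)" and ?CB = "PiM B (\<lambda>_. unit_unif)"
  show "finite ?K" using A B by simp
  fix S assume S: "\<And>k. k \<in> ?K \<Longrightarrow> S k \<in> sets unit_unif"
  have preimage: "merge_sum A B -` PiE ?K S \<inter> space (?CA \<Otimes>\<^sub>M ?CB)
      = PiE A (\<lambda>j. S (Inl j)) \<times> PiE B (\<lambda>j. S (Inr j))"
    by (auto simp: merge_sum_def space_pair_measure space_PiM PiE_iff extensional_def)
      (metis UnI1 imageI sum.case(1), metis UnI2 imageI sum.case(2))
  have A_sets: "PiE A (\<lambda>j. S (Inl j)) \<in> sets ?CA" and B_sets: "PiE B (\<lambda>j. S (Inr j)) \<in> sets ?CB"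
    using S by (auto intro!: sets_PiM_I_finite A B)
  have "emeasure (distr (?CA \<Otimes>\<^sub>M ?CB) (PiM ?K (\<lambda>_. unit_unif)) (merge_sum A B)) (PiE ?K S)
      = emeasure (?CA \<Otimes>\<^sub>M ?CB) (PiE A (\<lambda>j. S (Inl j)) \<times> PiE B (\<lambda>j. S (Inr j)))"
    using measurable_merge_sum[of A B] S A B preimage
    by (subst emeasure_distr) (auto simp: cube_def intro!: sets_PiM_I_finite)
  also have "\<dots> = emeasure ?CA (PiE A (\<lambda>j. S (Inl j))) * emeasure ?CB (PiE B (\<lambda>j. S (Inr j)))"
    using prob_space_cube[of B] A_sets B_sets
    by (simp add: cube_def prob_space_imp_sigma_finite sigma_finite_measure.emeasure_pair_measure_Times)
  also have "\<dots> = (\<Prod>j\<in>A. emeasure unit_unif (S (Inl j))) * (\<Prod>j\<in>B. emeasure unit_unif (S (Inr j)))"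
    using S A B by (simp add: unit_cube.emeasure_PiM)
  also have "\<dots> = (\<Prod>k\<in>?K. emeasure unit_unif (S k))"
  proof -
    have "Inl ` A \<inter> Inr ` B = {}" by auto
    then show ?thesis
      using A B by (simp add: prod.union_disjoint prod.reindex)
  qed
  finally show "emeasure (distr (?CA \<Otimes>\<^sub>M ?CB) (PiM ?K (\<lambda>_. unit_unif)) (merge_sum A B)) (PiE ?K S)
      = (\<Prod>k\<in>?K. emeasure unit_unif (S k))" .
qed (simp add: cube_def)

lemma measurable_cube_Inl: "(\<lambda>z j. z (Inl j)) \<in> measurable (cube (Inl ` A \<union> Inr ` B)) (cube A)"
  unfolding cube_def
  by (rule measurable_PiM_single') (auto simp: space_PiM PiE_iff extensional_def)

lemma measurable_cube_Inr: "(\<lambda>z j. z (Inr j)) \<in> measurable (cube (Inl ` A \<union> Inr ` B)) (cube B)"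
  unfolding cube_def
  by (rule measurable_PiM_single') (auto simp: space_PiM PiE_iff extensional_def)

context
  fixes A :: "'a set" and B :: "'b set"
  assumes finite_A: "finite A" and finite_B: "finite B"
begin

lemma integrable_cube_merge_sum_iff:
  fixes \<psi> :: "('a + 'b \<Rightarrow> real) \<Rightarrow> real"
  assumes "\<psi> \<in> borel_measurable (cube (Inl ` A \<union> Inr ` B))"
  shows "integrable (cube (Inl ` A \<union> Inr ` B)) \<psi> \<longleftrightarrow>
    integrable (cube A \<Otimes>\<^sub>M cube B) (\<lambda>p. \<psi> (merge_sum A B p))"
  using integrable_distr_eq[OF measurable_merge_sum assms] distr_merge_sum[OF finite_A finite_B]
  by simp

lemma integral_cube_merge_sum:
  fixes \<psi> :: "('a + 'b \<Rightarrow> real) \<Rightarrow> real"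
  assumes "\<psi> \<in> borel_measurable (cube (Inl ` A \<union> Inr ` B))"
  shows "(\<integral>z. \<psi> z \<partial>cube (Inl ` A \<union> Inr ` B)) = (\<integral>p. \<psi> (merge_sum A B p) \<partial>(cube A \<Otimes>\<^sub>M cube B))"
  using integral_distr[OF measurable_merge_sum assms] distr_merge_sum[OF finite_A finite_B]
  by simp

end

context
  fixes A :: "'a set" and B :: "'b set"
    and f :: "('a \<Rightarrow> real) \<Rightarrow> real" and h :: "('b \<Rightarrow> real) \<Rightarrow> real"
    and g :: "('a + 'b \<Rightarrow> real) \<Rightarrow> real"
  assumes finite_A: "finite A" and finite_B: "finite B"
    and f: "L2_cube A f" and h: "L2_cube B h"
    and g: "\<And>z. g z = f (\<lambda>j. z (Inl j)) + h (\<lambda>j. z (Inr j))"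
begin

interpretation cubes: pair_prob_space "cube A" "cube B"
  by (simp add: prob_spaces_imp_pair_prob_space prob_space_cube)

lemma separable_merge_sum:
  "p \<in> space (cube A \<Otimes>\<^sub>M cube B) \<Longrightarrow> g (merge_sum A B p) = f (fst p) + h (snd p)"
  by (auto simp: g merge_sum_Inl merge_sum_Inr space_pair_measure space_cube PiE_iff)

lemma L2_cube_separable: "L2_cube (Inl ` A \<union> Inr ` B) g"
proof -
  have f_meas: "f \<in> borel_measurable (cube A)" and h_meas: "h \<in> borel_measurable (cube B)"
    using f h by (simp_all add: L2_cube_def)
  have "g \<in> borel_measurable (cube (Inl ` A \<union> Inr ` B))"
    unfolding g[abs_def]
    using measurable_compose[OF measurable_cube_Inl f_meas] measurable_compose[OF measurable_cube_Inr h_meas]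
    by (rule borel_measurable_add)
  moreover have "integrable (cube A \<Otimes>\<^sub>M cube B) (\<lambda>(x, y). (f x + h y)\<^sup>2)"
    using f h unfolding L2_cube_def by (intro cubes.integrable_square_fst_plus_snd) auto
  then have "integrable (cube A \<Otimes>\<^sub>M cube B) (\<lambda>p. (g (merge_sum A B p))\<^sup>2)"
    by (rule Bochner_Integration.integrable_cong[THEN iffD1, OF refl, rotated])
      (simp add: separable_merge_sum split_beta)
  ultimately show ?thesis
    unfolding L2_cube_def
    by (simp add: integrable_cube_merge_sum_iff[OF finite_A finite_B])
qed

lemma integral_square_separable:
  "(\<integral>z. (g z)\<^sup>2 \<partial>cube (Inl ` A \<union> Inr ` B)) =
    (\<integral>x. (f x)\<^sup>2 \<partial>cube A) + 2 * (\<integral>x. f x \<partial>cube A) * (\<integral>y. h y \<partial>cube B) + (\<integral>y. (h y)\<^sup>2 \<partial>cube B)"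
proof -
  have "(\<integral>z. (g z)\<^sup>2 \<partial>cube (Inl ` A \<union> Inr ` B)) = (\<integral>p. (g (merge_sum A B p))\<^sup>2 \<partial>(cube A \<Otimes>\<^sub>M cube B))"
    using L2_cube_separable unfolding L2_cube_def
    by (intro integral_cube_merge_sum[OF finite_A finite_B]) auto
  also have "\<dots> = (\<integral>(x, y). (f x + h y)\<^sup>2 \<partial>(cube A \<Otimes>\<^sub>M cube B))"
    by (rule Bochner_Integration.integral_cong) (simp_all add: separable_merge_sum split_beta)
  also have "\<dots> = (\<integral>x. (f x)\<^sup>2 \<partial>cube A) + 2 * (\<integral>x. f x \<partial>cube A) * (\<integral>y. h y \<partial>cube B) + (\<integral>y. (h y)\<^sup>2 \<partial>cube B)"
    using f h unfolding L2_cube_def by (intro cubes.integral_square_fst_plus_snd) auto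
  finally show ?thesis .
qed

lemma mean_separable: "mean (Inl ` A \<union> Inr ` B) g = mean A f + mean B h"
proof -
  have "mean (Inl ` A \<union> Inr ` B) g = (\<integral>p. g (merge_sum A B p) \<partial>(cube A \<Otimes>\<^sub>M cube B))"
    using L2_cube_separable unfolding mean_def L2_cube_def
    by (simp add: integral_cube_merge_sum[OF finite_A finite_B])
  also have "\<dots> = (\<integral>(x, y). f x + h y \<partial>(cube A \<Otimes>\<^sub>M cube B))"
    by (rule Bochner_Integration.integral_cong) (simp_all add: separable_merge_sum split_beta)
  also have "\<dots> = mean A f + mean B h"
    unfolding mean_def using L2_cube_integrable[OF f] L2_cube_integrable[OF h]
    by (rule cubes.integral_fst_plus_snd)
  finally show ?thesis .
qed

lemma Var_separable: "Var (Inl ` A \<union> Inr ` B) g = Var A f + Var B h"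
  unfolding Var_def integral_square_separable mean_separable
  by (simp add: mean_def power2_sum)

lemma partial_mean_separable:
  assumes i: "i \<in> A" and x: "x \<in> space (cube A)" and y: "y \<in> space (cube B)"
    and integrable_section: "integrable unit_unif (\<lambda>t. f (x(i := t)))"
  shows "partial_mean (Inl i) g (merge_sum A B (x, y)) = partial_mean i f x + h y"
proof -
  have "x(i := t) \<in> extensional A" and "y \<in> extensional B" for t
    using x y i by (auto simp: space_cube PiE_iff extensional_def)
  then have "partial_mean (Inl i) g (merge_sum A B (x, y)) = (\<integral>t. f (x(i := t)) + h y \<partial>unit_unif)"
    unfolding partial_mean_def by (simp add: merge_sum_update_Inl[OF i] g merge_sum_Inl merge_sum_Inr)
  also have "\<dots> = partial_mean i f x + h y"
    using integrable_section unfolding partial_mean_def by (simp add: unit_unif.prob_space[unfolded space_unit_unif])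
  finally show ?thesis .
qed

lemma AE_partial_mean_separable:
  assumes i: "i \<in> A"
  shows "AE p in cube A \<Otimes>\<^sub>M cube B.
    partial_mean (Inl i) g (merge_sum A B p) = partial_mean i f (fst p) + h (snd p)"
proof -
  have "AE x in distr (cube A \<Otimes>\<^sub>M cube B) (cube A) fst. integrable unit_unif (\<lambda>t. f (x(i := t)))"
    unfolding cubes.M2.distr_pair_fst
    by (rule AE_integrable_update_section[OF finite_A i L2_cube_integrable[OF f]])
  from AE_distrD[OF measurable_fst this] AE_space show ?thesis
    by eventually_elim (auto simp: partial_mean_separable[OF i] space_pair_measure)
qed

lemma integral_square_partial_mean_separable:
  assumes i: "i \<in> A"
  shows "(\<integral>z. (partial_mean (Inl i) g z)\<^sup>2 \<partial>cube (Inl ` A \<union> Inr ` B)) =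
    (\<integral>x. (partial_mean i f x)\<^sup>2 \<partial>cube A) + 2 * (\<integral>x. f x \<partial>cube A) * (\<integral>y. h y \<partial>cube B)
      + (\<integral>y. (h y)\<^sup>2 \<partial>cube B)"
proof -
  have L2_g: "L2_cube (Inl ` A \<union> Inr ` B) (partial_mean (Inl i) g)"
    using finite_A finite_B i L2_cube_separable by (intro L2_cube_partial_mean) auto
  have L2_f: "L2_cube A (partial_mean i f)"
    by (rule L2_cube_partial_mean[OF finite_A i f])
  have "(\<integral>z. (partial_mean (Inl i) g z)\<^sup>2 \<partial>cube (Inl ` A \<union> Inr ` B))
      = (\<integral>p. (partial_mean (Inl i) g (merge_sum A B p))\<^sup>2 \<partial>(cube A \<Otimes>\<^sub>M cube B))"
    using L2_g unfolding L2_cube_def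
    by (intro integral_cube_merge_sum[OF finite_A finite_B]) auto
  also have "\<dots> = (\<integral>(x, y). (partial_mean i f x + h y)\<^sup>2 \<partial>(cube A \<Otimes>\<^sub>M cube B))"
  proof (rule integral_cong_AE)
    have "(\<lambda>z. (partial_mean (Inl i) g z)\<^sup>2) \<in> borel_measurable (cube (Inl ` A \<union> Inr ` B))"
      using L2_g by (auto simp: L2_cube_def)
    from measurable_compose[OF measurable_merge_sum this]
    show "(\<lambda>p. (partial_mean (Inl i) g (merge_sum A B p))\<^sup>2) \<in> borel_measurable (cube A \<Otimes>\<^sub>M cube B)" .
    have "partial_mean i f \<in> borel_measurable (cube A)" "h \<in> borel_measurable (cube B)"
      using L2_f h by (simp_all add: L2_cube_def)
    then show "(\<lambda>(x, y). (partial_mean i f x + h y)\<^sup>2) \<in> borel_measurable (cube A \<Otimes>\<^sub>M cube B)"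
      by measurable
    show "AE p in cube A \<Otimes>\<^sub>M cube B.
        (partial_mean (Inl i) g (merge_sum A B p))\<^sup>2 = (\<lambda>(x, y). (partial_mean i f x + h y)\<^sup>2) p"
      using AE_partial_mean_separable[OF i] by eventually_elim (simp add: split_beta)
  qed
  also have "\<dots> = (\<integral>x. (partial_mean i f x)\<^sup>2 \<partial>cube A) + 2 * (\<integral>x. f x \<partial>cube A) * (\<integral>y. h y \<partial>cube B)
      + (\<integral>y. (h y)\<^sup>2 \<partial>cube B)"
    using L2_f h integral_partial_mean[OF finite_A i L2_cube_integrable[OF f]]
    unfolding L2_cube_def by (subst cubes.integral_square_fst_plus_snd) auto
  finally show ?thesis .
qed

lemma sobol_total_separable:
  assumes "i \<in> A" and "0 < Var A f"
  shows "sobol_total (Inl ` A \<union> Inr ` B) (Inl i) g = (1 / (1 + Var B h / Var A f)) * sobol_total A i f"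
proof -
  have rescale: "N / (Var A f + Var B h) = (1 / (1 + Var B h / Var A f)) * (N / Var A f)" for N
    using assms(2) Var_nonneg[OF h] by (simp add: field_simps)
  have "(\<integral>z. (g z)\<^sup>2 \<partial>cube (Inl ` A \<union> Inr ` B)) - (\<integral>z. (partial_mean (Inl i) g z)\<^sup>2 \<partial>cube (Inl ` A \<union> Inr ` B))
      = (\<integral>x. (f x)\<^sup>2 \<partial>cube A) - (\<integral>x. (partial_mean i f x)\<^sup>2 \<partial>cube A)"
    unfolding integral_square_separable integral_square_partial_mean_separable[OF assms(1)] by simp
  then show ?thesis
    unfolding sobol_total_eq_partial_mean Var_separable by (simp only: rescale)
qed

end

theorem theorem2:
  fixes n m :: nat and i :: nat
    and f :: "(nat \<Rightarrow> real) \<Rightarrow> real" and h :: "(nat \<Rightarrow> real) \<Rightarrow> real"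
    and g :: "(nat + nat \<Rightarrow> real) \<Rightarrow> real"
  assumes "n \<ge> 1" and "m \<ge> 1"
    and "L2_cube {1..n} f" and "L2_cube {1..m} h"
    and "\<not> (\<exists>c. AE x in cube {1..n}. f x = c)"
    and "\<And>z. g z = f (\<lambda>j. z (Inl j)) + h (\<lambda>j. z (Inr j))"
    and "i \<in> {1..n}"
  shows "sobol_total (Inl ` {1..n} \<union> Inr ` {1..m}) (Inl i) g
           = (1 / (1 + Var {1..m} h / Var {1..n} f)) * sobol_total {1..n} i f
         \<and> sobol_total (Inl ` {1..n} \<union> Inr ` {1..m}) (Inl i) g \<le> sobol_total {1..n} i f"
proof -
  have finite: "finite {1..n}" "finite {1..m}" by simp_all
  have Var_f_pos: "0 < Var {1..n} f"
    using assms(3,5) by (rule Var_pos)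
  have separable: "sobol_total (Inl ` {1..n} \<union> Inr ` {1..m}) (Inl i) g
      = (1 / (1 + Var {1..m} h / Var {1..n} f)) * sobol_total {1..n} i f"
    using finite assms(3,4,6,7) Var_f_pos by (rule sobol_total_separable)
  have "0 \<le> Var {1..m} h / Var {1..n} f"
    using Var_f_pos Var_nonneg[OF assms(4)] by simp
  then have "1 / (1 + Var {1..m} h / Var {1..n} f) \<le> 1"
    by simp
  moreover have "0 \<le> sobol_total {1..n} i f"
    using finite(1) assms(7,3) by (rule sobol_total_nonneg)
  ultimately have "(1 / (1 + Var {1..m} h / Var {1..n} f)) * sobol_total {1..n} i f \<le> sobol_total {1..n} i f"
    by (metis mult.commute mult_left_le)
  with separable show ?thesis
    by simp
qed

end
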